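(* Assume the setting in the context with Assumptions (A1), (A2), (A3). Let $0<\tau_2<1/\zeta$ (any $\tau_2>0$ if $\zeta=0$). For $y_t\in Y$ and $z_t\in\mathcal X$, let $y^+(z_t)=\mathrm{prox}_{\tau_2h}\big(y_t+\tau_2\nabla_y\tilde f(x^*(y_t,z_t),y_t)\big)$. Then $\|x^*(y^+(z_t),z_t)-x^*(z_t)\|^2\le\frac{3}{\mu(p-l)\tau_2^2}\big(1+\tau_2^2l^2+\gamma_2^2\tau_2^2l^2\big)\|y^+(z_t)-y_t\|^2$, where $\gamma_2=\frac{p+l}{p-l}$.
   Context: $\mathcal X=\mathbb R^{d_1\times r}$ (Frobenius norm), $\mathcal Y=\mathbb R^{d_2}$, $\mathcal M=\{x:x^\top x=I_r\}$, $c(x)=x^\top x-I_r$, $A(x)=x(\frac32I_r-\frac12x^\top x)$; $C>\frac12+\sup_{x\in\mathcal M}\|x\|$, $X=\{x:\|x\|\le C\}$, $\bar X=\{A(x):\|x\|\le C\}$. $\partial$ is the Fréchet subdifferential; $\mathrm{prox}_{\tau h}(v)=\arg\min_y\{\tau h(y)+\frac12\|y-v\|^2\}$. (A1) $h:\mathcal Y\to\mathbb R\cup\{+\infty\}$ proper, closed, $\zeta$-weakly convex ($h+\frac\zeta2\|\cdot\|^2$ convex), closed domain $Y$, locally Lipschitz on $Y$, $Y$ bounded. (A2) $f$ differentiable on an open set containing $\bar X\times Y$ with $\|\nabla_xf(x_1,y_1)-\nabla_xf(x_2,y_2)\|\le L_{xx}\|x_1-x_2\|+L_{xy}\|y_1-y_2\|$,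 $\|\nabla_yf(x_1,y_1)-\nabla_yf(x_2,y_2)\|\le L_{yx}\|x_1-x_2\|+L_{yy}\|y_1-y_2\|$ on $\bar X\times Y$. (A3) With $f_r=f-h$, there is $\mu>0$ with $\max_wf_r(x,w)-f_r(x,y)\le\frac1{2\mu}\mathrm{dist}^2(0,-\nabla_yf(x,y)+\partial h(y))$ for all $x\in\bar X,y\in Y$. For $\rho>0$: $\tilde f(x,y)=f(A(x),y)+\frac\rho4\|c(x)\|^2$, $\tilde f_r=\tilde f-h$; $l$ is the (blockwise) Lipschitz constant of $\nabla\tilde f$ on $X\times Y$; standing choice $p>l$. $\hat f(x,y;z)=\tilde f(x,y)+\frac p2\|x-z\|^2$, $\hat f_r=\hat f-h$, $\Phi(x;z)=\max_{y\in\mathcal Y}\hat f_r(x,y;z)$, $x^*(y,z)=\arg\min_{x\in X}\hat f(x,y;z)$, $x^*(z)=\arg\min_{x\in X}\Phi(x;z)$. *)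

theory Defs
  imports "HOL-Analysis.Analysis"
begin

text \<open>Matrices x in R^(d1 x r) are rendered as real^'r^'d1 (rows indexed by 'd1);
  the norm on this type is the Frobenius norm and the inner product the Frobenius one.
  The extended-valued h : Y -> R u {+oo} is rendered as a real-valued function h together
  with its (closed) domain Ydom; h is understood to be +oo outside Ydom.\<close>

definition cmap :: "real^'r^'d1 \<Rightarrow> real^'r^'r" where
  "cmap x = transpose x ** x - mat 1"

definition Amap :: "real^'r^'d1 \<Rightarrow> real^'r^'d1" where
  "Amap x = x ** ((3/2) *\<^sub>R mat 1 - (1/2) *\<^sub>R (transpose x ** x))"

definition stiefel :: "(real^'r^'d1) set" where
  "stiefel = {x. transpose x ** x = mat 1}"

definition frechet_subdiff :: "'a::real_inner set \<Rightarrow> ('a \<Rightarrow> real) \<Rightarrow> 'a \<Rightarrow> 'a set" where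
  "frechet_subdiff Ydom h y = {g. y \<in> Ydom \<and>
     (\<forall>\<epsilon>>0. \<exists>\<delta>>0. \<forall>y'\<in>Ydom. norm (y' - y) < \<delta> \<longrightarrow>
        h y' \<ge> h y + inner g (y' - y) - \<epsilon> * norm (y' - y))}"

definition ftilde :: "(real^'r^'d1 \<Rightarrow> 'y \<Rightarrow> real) \<Rightarrow> real \<Rightarrow> real^'r^'d1 \<Rightarrow> 'y \<Rightarrow> real" where
  "ftilde f \<rho> x y = f (Amap x) y + \<rho> / 4 * (norm (cmap x))\<^sup>2"

definition fhat :: "(real^'r^'d1 \<Rightarrow> 'y \<Rightarrow> real) \<Rightarrow> real \<Rightarrow> real \<Rightarrow> real^'r^'d1 \<Rightarrow> 'y \<Rightarrow> real^'r^'d1 \<Rightarrow> real" where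
  "fhat f \<rho> p x y z = ftilde f \<rho> x y + p / 2 * (norm (x - z))\<^sup>2"

text \<open>Phi(x;z) = max over y of fhat_r(x,y;z); since h = +oo off Ydom this is a sup over Ydom.\<close>
definition Phi :: "(real^'r^'d1 \<Rightarrow> 'y \<Rightarrow> real) \<Rightarrow> ('y \<Rightarrow> real) \<Rightarrow> 'y set \<Rightarrow> real \<Rightarrow> real \<Rightarrow> real^'r^'d1 \<Rightarrow> real^'r^'d1 \<Rightarrow> real" where
  "Phi f h Ydom \<rho> p x z = (SUP y\<in>Ydom. fhat f \<rho> p x y z - h y)"

definition prox_obj :: "('y::real_normed_vector \<Rightarrow> real) \<Rightarrow> real \<Rightarrow> 'y \<Rightarrow> 'y \<Rightarrow> real" where
  "prox_obj h \<tau> v y = \<tau> * h y + 1/2 * (norm (y - v))\<^sup>2"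

end

theory Submission
  imports Defs
begin

(* Since the partial gradient of f~ in x is l-Lipschitz, fhat(., y; z) = f~(., y) + p/2 |. - z|^2
  is (p - l)-strongly convex on the ball X, and so is Phi(.; z) as a supremum of such functions.
  Quadratic growth of Phi at its minimiser x*(z), together with x+ = x*(y+, z) being a best
  response, bounds (p - l)/2 |x+ - x*(z)|^2 by the dual gap max_w f_r(A x+, w) - f_r(A x+, y+),
  and (A3) bounds that gap by the distance of grad_y f(A x+, y+) to the subdifferential of h at y+.
  The prox step provides the subgradient (y_t + tau2 grad_y f~(x_t, y_t) - y+) / tau2, whose
  distance to grad_y f(A x+, y+) = grad_y f~(x+, y+) is at most
  |y+ - y_t| / tau2 + l |x+ - x_t| + l |y+ - y_t|. Finally, strong convexity makes best responses
  Lipschitz: (p - l) |x+ - x_t| <= l |y+ - y_t|. *)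

lemma has_derivative_partials:
  fixes F :: "'a::real_inner \<Rightarrow> 'b::real_inner \<Rightarrow> real"
  assumes "((\<lambda>(x, y). F x y) has_derivative (\<lambda>(dx, dy). inner G dx + inner H dy)) (at (x, y))"
  shows "((\<lambda>x. F x y) has_derivative inner G) (at x)"
    and "((\<lambda>y. F x y) has_derivative inner H) (at y)"
proof -
  have "((\<lambda>(x, y). F x y) \<circ> (\<lambda>x. (x, y)) has_derivative
          (\<lambda>(dx, dy). inner G dx + inner H dy) \<circ> (\<lambda>d. (d, 0))) (at x)"
    by (intro diff_chain_at assms) (auto intro!: derivative_eq_intros)
  then show "((\<lambda>x. F x y) has_derivative inner G) (at x)"
    by (simp add: o_def)
  have "((\<lambda>(x, y). F x y) \<circ> (\<lambda>y. (x, y)) has_derivative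
          (\<lambda>(dx, dy). inner G dx + inner H dy) \<circ> (\<lambda>d. (0, d))) (at y)"
    by (intro diff_chain_at assms) (auto intro!: derivative_eq_intros)
  then show "((\<lambda>y. F x y) has_derivative inner H) (at y)"
    by (simp add: o_def)
qed

lemma has_real_derivative_along_line:
  assumes "(F has_derivative inner G) (at (a + s *\<^sub>R (b - a)))"
  shows "((\<lambda>s. F (a + s *\<^sub>R (b - a))) has_real_derivative inner G (b - a)) (at s)"
proof -
  have "(F \<circ> (\<lambda>s. a + s *\<^sub>R (b - a)) has_derivative inner G \<circ> (\<lambda>s. s *\<^sub>R (b - a))) (at s)"
    by (intro diff_chain_at assms) (auto intro!: derivative_eq_intros)
  then show ?thesis
    by (simp add: has_field_derivative_def o_def mult_commute_abs)
qed

lemma convex_on_add_norm_sq_if_lipschitz_gradient: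
  fixes F :: "'a::real_inner \<Rightarrow> real"
  assumes X: "convex X"
    and F: "\<And>x. x \<in> X \<Longrightarrow> (F has_derivative inner (G x)) (at x)"
    and G: "\<And>x y. x \<in> X \<Longrightarrow> y \<in> X \<Longrightarrow> norm (G x - G y) \<le> l * norm (x - y)"
  shows "convex_on X (\<lambda>x. F x + l / 2 * (norm x)\<^sup>2)"
proof (rule convex_onI[OF _ X])
  fix t :: real and a b assume t: "0 < t" "t < 1" and ab: "a \<in> X" "b \<in> X"
  define x where "x s = a + s *\<^sub>R (b - a)" for s
  define \<phi> where "\<phi> s = F (x s) + l / 2 * (norm (x s))\<^sup>2" for s
  define \<phi>' where "\<phi>' s = inner (G (x s)) (b - a) + l * inner (x s) (b - a)" for s
  have xX: "x s \<in> X" if "s \<in> {0..1}" for s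
    using convexD_alt[OF X ab, of s] that by (simp add: x_def algebra_simps)
  have "convex_on {0..1} \<phi>"
  proof (rule convex_on_realI[where f' = \<phi>'])
    fix s :: real assume "s \<in> {0..1}"
    then have "((\<lambda>s. F (x s)) has_real_derivative inner (G (x s)) (b - a)) (at s)"
      unfolding x_def by (intro has_real_derivative_along_line F) (use xX x_def in auto)
    then show "(\<phi> has_real_derivative \<phi>' s) (at s)"
      unfolding \<phi>_def \<phi>'_def power2_norm_eq_inner
      by (auto intro!: derivative_eq_intros simp: x_def inner_commute algebra_simps)
  next
    fix s u :: real assume su: "s \<in> {0..1}" "u \<in> {0..1}" "s \<le> u"
    have step: "x u - x s = (u - s) *\<^sub>R (b - a)"
      by (simp add: x_def algebra_simps)
    have "inner (G (x s) - G (x u)) (b - a) \<le> norm (G (x u) - G (x s)) * norm (b - a)"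
      using norm_cauchy_schwarz by (metis norm_minus_commute)
    also have "\<dots> \<le> l * norm (x u - x s) * norm (b - a)"
      using G[OF xX xX, OF su(2,1)] by (simp add: mult_right_mono)
    also have "\<dots> = l * (u - s) * inner (b - a) (b - a)"
      using su(3) by (simp add: step power2_eq_square flip: power2_norm_eq_inner)
    finally show "\<phi>' s \<le> \<phi>' u"
      by (simp add: \<phi>'_def x_def algebra_simps)
  qed simp
  from convex_onD[OF this, of t 0 1] t
  show "F ((1 - t) *\<^sub>R a + t *\<^sub>R b) + l / 2 * (norm ((1 - t) *\<^sub>R a + t *\<^sub>R b))\<^sup>2
      \<le> (1 - t) * (F a + l / 2 * (norm a)\<^sup>2) + t * (F b + l / 2 * (norm b)\<^sup>2)"
    by (simp add: \<phi>_def x_def algebra_simps)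
qed

definition strongly_convex_on :: "'a::real_inner set \<Rightarrow> real \<Rightarrow> ('a \<Rightarrow> real) \<Rightarrow> bool" where
  "strongly_convex_on S m F \<longleftrightarrow> convex_on S (\<lambda>x. F x - m / 2 * (norm x)\<^sup>2)"

lemma strongly_convex_on_add_proximal_term:
  fixes F :: "'a::real_inner \<Rightarrow> real"
  assumes "convex_on X (\<lambda>x. F x + l / 2 * (norm x)\<^sup>2)"
  shows "strongly_convex_on X (p - l) (\<lambda>x. F x + p / 2 * (norm (x - z))\<^sup>2)"
proof -
  have affine: "convex_on X (\<lambda>x. p / 2 * (norm z)\<^sup>2 - p * inner x z)"
    using convex_on_imp_convex[OF assms]
    by (intro convex_onI) (simp_all add: inner_add_left inner_diff_left field_simps)
  have "(\<lambda>x. F x + p / 2 * (norm (x - z))\<^sup>2 - (p - l) / 2 * (norm x)\<^sup>2)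
      = (\<lambda>x. (F x + l / 2 * (norm x)\<^sup>2) + (p / 2 * (norm z)\<^sup>2 - p * inner x z))"
    unfolding power2_norm_eq_inner
    by (simp add: fun_eq_iff inner_diff_left inner_diff_right inner_commute field_simps)
  then show ?thesis
    unfolding strongly_convex_on_def using convex_on_add[OF assms affine] by simp
qed

lemma strongly_convex_on_cSUP:
  assumes "Y \<noteq> {}"
    and convex: "\<And>y. y \<in> Y \<Longrightarrow> strongly_convex_on X m (g y)"
    and bdd: "\<And>x. x \<in> X \<Longrightarrow> bdd_above ((\<lambda>y. g y x) ` Y)"
  shows "strongly_convex_on X m (\<lambda>x. SUP y\<in>Y. g y x)"
  unfolding strongly_convex_on_def
proof (rule convex_onI)
  fix t :: real and a b assume t: "0 < t" "t < 1" and ab: "a \<in> X" "b \<in> X"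
  let ?x = "(1 - t) *\<^sub>R a + t *\<^sub>R b" and ?q = "\<lambda>x. m / 2 * (norm x)\<^sup>2"
  have "(SUP y\<in>Y. g y ?x) \<le> (1 - t) * ((SUP y\<in>Y. g y a) - ?q a) + t * ((SUP y\<in>Y. g y b) - ?q b) + ?q ?x"
  proof (rule cSUP_least[OF \<open>Y \<noteq> {}\<close>])
    fix y assume y: "y \<in> Y"
    have "g y ?x - ?q ?x \<le> (1 - t) * (g y a - ?q a) + t * (g y b - ?q b)"
      using convex_onD[OF convex[OF y, unfolded strongly_convex_on_def], of t a b] t ab by simp
    moreover have "g y a - ?q a \<le> (SUP y\<in>Y. g y a) - ?q a" "g y b - ?q b \<le> (SUP y\<in>Y. g y b) - ?q b"
      using y bdd ab by (auto intro: cSUP_upper)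
    then have "(1 - t) * (g y a - ?q a) + t * (g y b - ?q b)
        \<le> (1 - t) * ((SUP y\<in>Y. g y a) - ?q a) + t * ((SUP y\<in>Y. g y b) - ?q b)"
      using t by (intro add_mono mult_left_mono) auto
    ultimately show "g y ?x \<le> (1 - t) * ((SUP y\<in>Y. g y a) - ?q a) + t * ((SUP y\<in>Y. g y b) - ?q b) + ?q ?x"
      by linarith
  qed
  then show "(SUP y\<in>Y. g y ?x) - ?q ?x \<le> (1 - t) * ((SUP y\<in>Y. g y a) - ?q a) + t * ((SUP y\<in>Y. g y b) - ?q b)"
    by simp
next
  obtain y where "y \<in> Y" using \<open>Y \<noteq> {}\<close> by blast
  with convex show "convex X"
    unfolding strongly_convex_on_def by (blast dest: convex_on_imp_convex)
qed

lemma norm_convex_combination_sq: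
  fixes a b :: "'a::real_inner"
  shows "(norm ((1 - t) *\<^sub>R a + t *\<^sub>R b))\<^sup>2
    = (1 - t) * (norm a)\<^sup>2 + t * (norm b)\<^sup>2 - t * (1 - t) * (norm (b - a))\<^sup>2"
  unfolding power2_norm_eq_inner
  by (simp add: inner_add_left inner_add_right inner_diff_left inner_diff_right inner_commute algebra_simps)

lemma strongly_convex_on_argmin_growth:
  assumes F: "strongly_convex_on X m F" and a: "is_arg_min F (\<lambda>x. x \<in> X) a" and b: "b \<in> X"
  shows "m / 2 * (norm (b - a))\<^sup>2 \<le> F b - F a"
proof (rule field_le_mult_one_interval)
  from a have a_X: "a \<in> X" and min: "\<And>x. x \<in> X \<Longrightarrow> F a \<le> F x"
    by (simp_all add: is_arg_min_linorder)
  fix s :: real assume s: "0 < s" "s < 1"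
  define t where "t = 1 - s"
  let ?x = "(1 - t) *\<^sub>R a + t *\<^sub>R b"
  have t: "0 \<le> t" "t \<le> 1" using s by (simp_all add: t_def)
  have "convex X"
    using F convex_on_imp_convex unfolding strongly_convex_on_def by blast
  then have x: "?x \<in> X"
    using a_X b t by (simp add: convexD)
  have "F ?x \<le> (1 - t) * F a + t * F b - m / 2 * t * (1 - t) * (norm (b - a))\<^sup>2"
    using convex_onD[OF F[unfolded strongly_convex_on_def] t a_X b]
    unfolding norm_convex_combination_sq by (simp add: field_simps)
  with min[OF x] have "t * (s * (m / 2 * (norm (b - a))\<^sup>2)) \<le> t * (F b - F a)"
    by (simp add: t_def algebra_simps)
  then show "s * (m / 2 * (norm (b - a))\<^sup>2) \<le> F b - F a"
    using s by (simp add: t_def)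
qed

lemma argmin_distance_le:
  assumes "strongly_convex_on X m F" "strongly_convex_on X m F'"
    and a: "is_arg_min F (\<lambda>x. x \<in> X) a" and a': "is_arg_min F' (\<lambda>x. x \<in> X) a'"
    and cross: "(F a' - F' a') - (F a - F' a) \<le> B * norm (a' - a)"
  shows "m * (norm (a' - a))\<^sup>2 \<le> B * norm (a' - a)"
proof -
  have "m / 2 * (norm (a' - a))\<^sup>2 \<le> F a' - F a"
    using a' by (intro strongly_convex_on_argmin_growth[OF assms(1) a]) (simp add: is_arg_min_def)
  moreover have "m / 2 * (norm (a - a'))\<^sup>2 \<le> F' a - F' a'"
    using a by (intro strongly_convex_on_argmin_growth[OF assms(2) a']) (simp add: is_arg_min_def)
  ultimately show ?thesis
    using cross by (simp add: norm_minus_commute)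
qed

lemma argmin_distance_le_gap:
  assumes \<Phi>: "strongly_convex_on X m \<Phi>"
    and a: "is_arg_min \<Phi> (\<lambda>x. x \<in> X) a" and b: "is_arg_min q (\<lambda>x. x \<in> X) b"
    and lower: "\<And>x. x \<in> X \<Longrightarrow> q x + c \<le> \<Phi> x"
  shows "m / 2 * (norm (b - a))\<^sup>2 \<le> \<Phi> b - (q b + c)"
proof -
  from a b have "a \<in> X" "b \<in> X" "q b \<le> q a"
    by (simp_all add: is_arg_min_linorder)
  then show ?thesis
    using strongly_convex_on_argmin_growth[OF \<Phi> a] lower by fastforce
qed

lemma difference_lipschitz_if_gradients_close:
  fixes F F' :: "'a::real_inner \<Rightarrow> real"
  assumes X: "convex X"
    and F: "\<And>x. x \<in> X \<Longrightarrow> (F has_derivative inner (G x)) (at x)"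
    and F': "\<And>x. x \<in> X \<Longrightarrow> (F' has_derivative inner (G' x)) (at x)"
    and close: "\<And>x. x \<in> X \<Longrightarrow> norm (G x - G' x) \<le> B"
    and ab: "a \<in> X" "b \<in> X"
  shows "\<bar>(F b - F' b) - (F a - F' a)\<bar> \<le> B * norm (b - a)"
proof -
  have "norm ((F b - F' b) - (F a - F' a)) \<le> B * norm (b - a)"
  proof (rule differentiable_bound[OF X _ _ ab(2,1)])
    fix x assume x: "x \<in> X"
    have "inner (G x - G' x) = (\<lambda>d. inner (G x) d - inner (G' x) d)"
      by (simp add: fun_eq_iff inner_diff_left)
    then show "((\<lambda>x. F x - F' x) has_derivative inner (G x - G' x)) (at x within X)"
      using has_derivative_diff[OF F[OF x] F'[OF x]] by (simp add: has_derivative_at_withinI)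
    have "onorm (inner (G x - G' x)) \<le> norm (G x - G' x) * onorm (\<lambda>x::'a. x)"
      by (rule onorm_inner_right[OF bounded_linear_ident])
    also have "\<dots> \<le> norm (G x - G' x)"
      by (rule mult_left_le[OF onorm_id_le norm_ge_zero])
    also have "\<dots> \<le> B"
      using close[OF x] .
    finally show "onorm (inner (G x - G' x)) \<le> B" .
  qed
  then show ?thesis by simp
qed

lemma prox_frechet_subgradient:
  fixes h :: "'a::real_inner \<Rightarrow> real"
  assumes \<tau>: "\<tau> > 0" and yp: "is_arg_min (prox_obj h \<tau> v) (\<lambda>y. y \<in> Y) yp"
  shows "(1 / \<tau>) *\<^sub>R (v - yp) \<in> frechet_subdiff Y h yp"
proof -
  define g where "g = (1 / \<tau>) *\<^sub>R (v - yp)"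
  have ypY: "yp \<in> Y"
    using yp by (simp add: is_arg_min_def)
  have quadratic_minorant: "h yp + inner g (y - yp) - 1 / (2 * \<tau>) * (norm (y - yp))\<^sup>2 \<le> h y"
    if y: "y \<in> Y" for y
  proof -
    have "\<tau> * h yp + 1 / 2 * (norm (yp - v))\<^sup>2 \<le> \<tau> * h y + 1 / 2 * (norm (y - v))\<^sup>2"
      using yp y unfolding is_arg_min_def prox_obj_def by (metis not_less)
    moreover have "(norm (y - v))\<^sup>2 = (norm (y - yp))\<^sup>2 - 2 * \<tau> * inner g (y - yp) + (norm (yp - v))\<^sup>2"
      using \<tau> unfolding g_def power2_norm_eq_inner
      by (simp add: inner_diff_left inner_diff_right inner_commute algebra_simps)
    ultimately show ?thesis
      using \<tau> by (simp add: field_simps)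
  qed
  show ?thesis
    unfolding frechet_subdiff_def g_def[symmetric]
  proof (intro CollectI conjI ypY allI impI)
    fix \<epsilon> :: real assume \<epsilon>: "\<epsilon> > 0"
    show "\<exists>\<delta>>0. \<forall>y\<in>Y. norm (y - yp) < \<delta> \<longrightarrow> h yp + inner g (y - yp) - \<epsilon> * norm (y - yp) \<le> h y"
    proof (intro exI[of _ "2 * \<tau> * \<epsilon>"] conjI ballI impI)
      fix y assume y: "y \<in> Y" and close: "norm (y - yp) < 2 * \<tau> * \<epsilon>"
      have "1 / (2 * \<tau>) * (norm (y - yp))\<^sup>2 = norm (y - yp) / (2 * \<tau>) * norm (y - yp)"
        by (simp add: power2_eq_square)
      also have "\<dots> \<le> \<epsilon> * norm (y - yp)"
        using close \<tau> by (intro mult_right_mono) (simp_all add: field_simps)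
      finally show "h yp + inner g (y - yp) - \<epsilon> * norm (y - yp) \<le> h y"
        using quadratic_minorant[OF y] by linarith
    qed (use \<tau> \<epsilon> in simp)
  qed
qed

lemma continuous_on_if_locally_lipschitz:
  fixes h :: "'a::real_normed_vector \<Rightarrow> real"
  assumes "\<forall>y\<in>Y. \<exists>\<delta>>0. \<exists>L. \<forall>a\<in>Y. \<forall>b\<in>Y.
             norm (a - y) < \<delta> \<longrightarrow> norm (b - y) < \<delta> \<longrightarrow> \<bar>h a - h b\<bar> \<le> L * norm (a - b)"
  shows "continuous_on Y h"
  unfolding continuous_on_eq_continuous_within
proof
  fix y assume y: "y \<in> Y"
  then obtain \<delta> L where \<delta>: "\<delta> > 0" and L: "\<forall>a\<in>Y. \<forall>b\<in>Y.
      norm (a - y) < \<delta> \<longrightarrow> norm (b - y) < \<delta> \<longrightarrow> \<bar>h a - h b\<bar> \<le> L * norm (a - b)"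
    using assms by blast
  have "\<bar>L\<bar>-lipschitz_on (Y \<inter> ball y \<delta>) h"
  proof (rule lipschitz_onI)
    fix a b assume "a \<in> Y \<inter> ball y \<delta>" "b \<in> Y \<inter> ball y \<delta>"
    then have "\<bar>h a - h b\<bar> \<le> L * norm (a - b)"
      using L by (auto simp: dist_norm norm_minus_commute)
    also have "\<dots> \<le> \<bar>L\<bar> * norm (a - b)"
      by (simp add: mult_right_mono)
    finally show "dist (h a) (h b) \<le> \<bar>L\<bar> * dist a b"
      by (simp add: dist_norm)
  qed simp
  then have "continuous (at y within Y \<inter> ball y \<delta>) h"
    by (rule lipschitz_on_continuous_within) (simp add: y \<delta>)
  moreover have "at y within Y \<inter> ball y \<delta> = at y within Y"
    by (rule at_within_nhd[of _ "ball y \<delta>"]) (auto simp: \<delta>)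
  ultimately show "continuous (at y within Y) h"
    by simp
qed

lemma infdist_shifted_le:
  fixes S :: "'a::real_normed_vector set"
  assumes "g \<in> S"
  shows "infdist 0 ((\<lambda>u. - v + u) ` S) \<le> norm (g - v)"
  using infdist_le[OF imageI[OF assms], of 0 "\<lambda>u. - v + u"] by (simp add: dist_norm norm_minus_commute)

lemma prox_residual_norm_le:
  fixes y y' G G' :: "'a::real_normed_vector"
  assumes "\<tau> > 0"
  shows "norm ((1 / \<tau>) *\<^sub>R (y + \<tau> *\<^sub>R G - y') - G') \<le> norm (y' - y) / \<tau> + norm (G - G')"
proof -
  have split: "(1 / \<tau>) *\<^sub>R (y + \<tau> *\<^sub>R G - y') - G' = (1 / \<tau>) *\<^sub>R (y - y') + (G - G')"
    using assms by (simp add: algebra_simps)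
  have "norm ((1 / \<tau>) *\<^sub>R (y - y')) = norm (y' - y) / \<tau>"
    using assms by (simp add: norm_minus_commute)
  then show ?thesis
    unfolding split by (metis norm_triangle_ineq)
qed

lemma ftilde_gradient_snd_eq:
  assumes "((\<lambda>(x, y). f x y) has_derivative (\<lambda>(dx, dy). inner G dx + inner H dy)) (at (Amap x, y))"
    and "((\<lambda>(x, y). ftilde f \<rho> x y) has_derivative (\<lambda>(dx, dy). inner G' dx + inner H' dy)) (at (x, y))"
  shows "H' = H"
proof -
  have "((\<lambda>w. f (Amap x) w) has_derivative inner H) (at y)"
    using has_derivative_partials(2)[OF assms(1)] .
  then have "((\<lambda>w. ftilde f \<rho> x w) has_derivative inner H) (at y)"
    unfolding ftilde_def by (rule has_derivative_add_const)
  with has_derivative_partials(2)[OF assms(2)] show ?thesis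
    by (metis has_derivative_unique vector_eq_rdot)
qed

locale proximal_minimax =
  fixes f :: "real^'r::finite^'d1::finite \<Rightarrow> 'y::real_inner \<Rightarrow> real"
    and gtx :: "real^'r^'d1 \<Rightarrow> 'y \<Rightarrow> real^'r^'d1"
    and gty :: "real^'r^'d1 \<Rightarrow> 'y \<Rightarrow> 'y"
    and h :: "'y \<Rightarrow> real"
    and X :: "(real^'r^'d1) set" and Y :: "'y set"
    and \<rho> l p :: real and z :: "real^'r^'d1"
  assumes convex_X: "convex X"
    and Y_nonempty: "Y \<noteq> {}" and compact_Y: "compact Y"
    and continuous_h: "continuous_on Y h"
    and ftilde_gradient: "\<And>x y. x \<in> X \<Longrightarrow> y \<in> Y \<Longrightarrow>
      ((\<lambda>(x, y). ftilde f \<rho> x y) has_derivative (\<lambda>(dx, dy). inner (gtx x y) dx + inner (gty x y) dy)) (at (x, y))"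
    and gtx_lipschitz: "\<And>x y x' y'. x \<in> X \<Longrightarrow> y \<in> Y \<Longrightarrow> x' \<in> X \<Longrightarrow> y' \<in> Y \<Longrightarrow>
      norm (gtx x y - gtx x' y') \<le> l * norm (x - x') + l * norm (y - y')"
begin

lemma ftilde_has_derivative_fst:
    "x \<in> X \<Longrightarrow> y \<in> Y \<Longrightarrow> ((\<lambda>x. ftilde f \<rho> x y) has_derivative inner (gtx x y)) (at x)"
  and ftilde_has_derivative_snd:
    "x \<in> X \<Longrightarrow> y \<in> Y \<Longrightarrow> ((\<lambda>y. ftilde f \<rho> x y) has_derivative inner (gty x y)) (at y)"
  using has_derivative_partials ftilde_gradient by blast+

lemma fhat_strongly_convex:
  assumes y: "y \<in> Y"
  shows "strongly_convex_on X (p - l) (\<lambda>x. fhat f \<rho> p x y z - c)"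
proof -
  have "((\<lambda>x. ftilde f \<rho> x y - c) has_derivative inner (gtx x y)) (at x)" if "x \<in> X" for x
    using has_derivative_diff[OF ftilde_has_derivative_fst[OF that y] has_derivative_const] by simp
  moreover have "norm (gtx x y - gtx x' y) \<le> l * norm (x - x')" if "x \<in> X" "x' \<in> X" for x x'
    using gtx_lipschitz[OF that(1) y that(2) y] by simp
  ultimately have "convex_on X (\<lambda>x. (ftilde f \<rho> x y - c) + l / 2 * (norm x)\<^sup>2)"
    by (rule convex_on_add_norm_sq_if_lipschitz_gradient[OF convex_X])
  from strongly_convex_on_add_proximal_term[OF this, of p z] show ?thesis
    by (simp add: fhat_def algebra_simps)
qed

lemma continuous_on_f:
  assumes x: "x \<in> X"
  shows "continuous_on Y (\<lambda>w. f (Amap x) w)"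
proof -
  have "continuous_on Y (\<lambda>w. ftilde f \<rho> x w)"
    using ftilde_has_derivative_snd[OF x]
    by (intro continuous_at_imp_continuous_on ballI has_derivative_continuous)
  then have "continuous_on Y (\<lambda>w. ftilde f \<rho> x w - \<rho> / 4 * (norm (cmap x))\<^sup>2)"
    by (intro continuous_intros)
  then show ?thesis
    by (simp add: ftilde_def)
qed

lemma bdd_above_continuous_image: "continuous_on Y g \<Longrightarrow> bdd_above (g ` Y)"
  for g :: "'y \<Rightarrow> real"
  by (intro bounded_imp_bdd_above compact_imp_bounded compact_continuous_image compact_Y)

lemma bdd_above_fhat: "x \<in> X \<Longrightarrow> bdd_above ((\<lambda>y. fhat f \<rho> p x y z - h y) ` Y)"
  unfolding fhat_def ftilde_def
  by (intro bdd_above_continuous_image continuous_intros continuous_on_f continuous_h)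

lemma bdd_above_f: "x \<in> X \<Longrightarrow> bdd_above ((\<lambda>w. f (Amap x) w - h w) ` Y)"
  by (intro bdd_above_continuous_image continuous_intros continuous_on_f continuous_h)

lemma Phi_strongly_convex: "strongly_convex_on X (p - l) (\<lambda>x. Phi f h Y \<rho> p x z)"
  unfolding Phi_def by (rule strongly_convex_on_cSUP[OF Y_nonempty fhat_strongly_convex bdd_above_fhat])

lemma Phi_argmin_distance_le:
  assumes xs: "is_arg_min (\<lambda>x. Phi f h Y \<rho> p x z) (\<lambda>x. x \<in> X) xs"
    and y: "y \<in> Y" and x': "is_arg_min (\<lambda>x. fhat f \<rho> p x y z) (\<lambda>x. x \<in> X) x'"
  shows "(p - l) / 2 * (norm (x' - xs))\<^sup>2 \<le> (SUP w\<in>Y. f (Amap x') w - h w) - (f (Amap x') y - h y)"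
proof -
  define K where "K x = \<rho> / 4 * (norm (cmap x))\<^sup>2 + p / 2 * (norm (x - z))\<^sup>2" for x
  have "fhat f \<rho> p x y z + - h y \<le> Phi f h Y \<rho> p x z" if "x \<in> X" for x
    using cSUP_upper[OF y bdd_above_fhat[OF that]] by (simp add: Phi_def)
  then have "(p - l) / 2 * (norm (x' - xs))\<^sup>2 \<le> Phi f h Y \<rho> p x' z - (fhat f \<rho> p x' y z + - h y)"
    by (rule argmin_distance_le_gap[OF Phi_strongly_convex xs x'])
  moreover have "fhat f \<rho> p x' w z - h w = (f (Amap x') w - h w) + K x'" for w
    by (simp add: fhat_def ftilde_def K_def)
  moreover have "(SUP w\<in>Y. (f (Amap x') w - h w) + K x') \<le> (SUP w\<in>Y. f (Amap x') w - h w) + K x'"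
    using x' cSUP_upper[OF _ bdd_above_f] by (intro cSUP_least Y_nonempty) (simp add: is_arg_min_def)
  ultimately show ?thesis
    by (simp add: Phi_def)
qed

lemma fhat_argmin_stability:
  assumes y: "y \<in> Y" and y': "y' \<in> Y"
    and x: "is_arg_min (\<lambda>x. fhat f \<rho> p x y z) (\<lambda>x. x \<in> X) x"
    and x': "is_arg_min (\<lambda>x. fhat f \<rho> p x y' z) (\<lambda>x. x \<in> X) x'"
  shows "(p - l) * (norm (x' - x))\<^sup>2 \<le> l * norm (y' - y) * norm (x' - x)"
proof -
  have "norm (gtx w y - gtx w y') \<le> l * norm (y' - y)" if "w \<in> X" for w
    using gtx_lipschitz[OF that y that y'] by (simp add: norm_minus_commute)
  then have "\<bar>(ftilde f \<rho> x' y - ftilde f \<rho> x' y') - (ftilde f \<rho> x y - ftilde f \<rho> x y')\<bar>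
      \<le> l * norm (y' - y) * norm (x' - x)"
    using x x' y y' convex_X ftilde_has_derivative_fst
    by (intro difference_lipschitz_if_gradients_close[where G = "\<lambda>w. gtx w y" and G' = "\<lambda>w. gtx w y'"])
      (auto simp: is_arg_min_def)
  then have "(fhat f \<rho> p x' y z - fhat f \<rho> p x' y' z) - (fhat f \<rho> p x y z - fhat f \<rho> p x y' z)
      \<le> l * norm (y' - y) * norm (x' - x)"
    by (simp add: fhat_def)
  with argmin_distance_le[OF fhat_strongly_convex[OF y, of 0, simplified]
      fhat_strongly_convex[OF y', of 0, simplified] x x']
  show ?thesis .
qed

end

lemma power2_sum3_le: "(u + v + w)\<^sup>2 \<le> 3 * (u\<^sup>2 + v\<^sup>2 + w\<^sup>2)" for u v w :: real
proof -
  have "0 \<le> (u - v)\<^sup>2 + (v - w)\<^sup>2 + (u - w)\<^sup>2"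
    by simp
  then show ?thesis
    by (simp add: power2_eq_square algebra_simps)
qed

lemma error_bound_from_estimates:
  fixes D N d e l p \<mu> \<tau> :: real
  assumes \<mu>: "\<mu> > 0" and pl: "p > l" and \<tau>: "\<tau> > 0" and d: "d \<ge> 0" and e: "e \<ge> 0"
    and gap: "(p - l) / 2 * D\<^sup>2 \<le> 1 / (2 * \<mu>) * N\<^sup>2"
    and N: "0 \<le> N" "N \<le> d / \<tau> + l * e + l * d"
    and stability: "(p - l) * e\<^sup>2 \<le> l * d * e"
  shows "D\<^sup>2 \<le> 3 / (\<mu> * (p - l) * \<tau>\<^sup>2) * (1 + \<tau>\<^sup>2 * l\<^sup>2 + ((p + l) / (p - l))\<^sup>2 * \<tau>\<^sup>2 * l\<^sup>2) * d\<^sup>2"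
proof -
  define \<gamma> where "\<gamma> = (p + l) / (p - l)"
  have le: "(l * e)\<^sup>2 \<le> (\<gamma> * l * d)\<^sup>2"
  proof (cases "e = 0")
    case False
    with e stability have "(p - l) * e \<le> l * d"
      by (simp add: power2_eq_square)
    moreover have "0 < (p - l) * e"
      using False e pl by simp
    ultimately have l: "l > 0"
      using d by (smt (verit) mult_nonpos_nonneg)
    have "e \<le> l * d / (p - l)"
      using \<open>(p - l) * e \<le> l * d\<close> pl by (simp add: field_simps)
    also have "\<dots> \<le> (p + l) * d / (p - l)"
      using pl l d by (intro divide_right_mono mult_right_mono) auto
    also have "\<dots> = \<gamma> * d"
      by (simp add: \<gamma>_def)
    finally show ?thesis
      using e l by (intro power_mono) (simp_all add: mult_left_mono)
  qed simp
  have "N\<^sup>2 \<le> (d / \<tau> + l * e + l * d)\<^sup>2"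
    using N by (intro power_mono)
  also have "\<dots> \<le> 3 * ((d / \<tau>)\<^sup>2 + (l * e)\<^sup>2 + (l * d)\<^sup>2)"
    by (rule power2_sum3_le)
  also have "\<dots> \<le> 3 * ((d / \<tau>)\<^sup>2 + (\<gamma> * l * d)\<^sup>2 + (l * d)\<^sup>2)"
    using le by simp
  finally have "D\<^sup>2 \<le> 3 * ((d / \<tau>)\<^sup>2 + (\<gamma> * l * d)\<^sup>2 + (l * d)\<^sup>2) / (\<mu> * (p - l))"
    using gap \<mu> pl by (simp add: field_simps)
  also have "\<dots> = 3 / (\<mu> * (p - l) * \<tau>\<^sup>2) * (1 + \<tau>\<^sup>2 * l\<^sup>2 + \<gamma>\<^sup>2 * \<tau>\<^sup>2 * l\<^sup>2) * d\<^sup>2"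
    using \<tau> by (simp add: field_simps power2_eq_square)
  finally show ?thesis
    by (simp add: \<gamma>_def)
qed

theorem lemma9:
  fixes f :: "real^'r::finite^'d1::finite \<Rightarrow> real^'d2::finite \<Rightarrow> real"
    and gx :: "real^'r^'d1 \<Rightarrow> real^'d2 \<Rightarrow> real^'r^'d1"
    and gy :: "real^'r^'d1 \<Rightarrow> real^'d2 \<Rightarrow> real^'d2"
    and gtx :: "real^'r^'d1 \<Rightarrow> real^'d2 \<Rightarrow> real^'r^'d1"
    and gty :: "real^'r^'d1 \<Rightarrow> real^'d2 \<Rightarrow> real^'d2"
    and h :: "real^'d2 \<Rightarrow> real"
    and Y :: "(real^'d2) set"
    and C \<zeta> Lxx Lxy Lyx Lyy \<mu> \<rho> l p \<tau>2 :: real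
    and yt :: "real^'d2" and zt :: "real^'r^'d1"
    and xt x1 xs :: "real^'r^'d1" and yp :: "real^'d2"
  defines "X \<equiv> cball (0::real^'r^'d1) C"
    and "Xbar \<equiv> Amap ` cball (0::real^'r^'d1) C"
  assumes dims: "CARD('r) \<le> CARD('d1)"
    and C: "C > 1/2 + (SUP x\<in>(stiefel::(real^'r^'d1) set). norm x)"
    \<comment> \<open>(A1)\<close>
    and A1_proper: "Y \<noteq> {}"
    and A1_closed: "closed Y"
    and A1_bounded: "bounded Y"
    and A1_zeta: "\<zeta> \<ge> 0"
    and A1_weakly_convex: "convex Y" "convex_on Y (\<lambda>y. h y + \<zeta> / 2 * (norm y)\<^sup>2)"
    and A1_loclip: "\<forall>y\<in>Y. \<exists>\<delta>>0. \<exists>L. \<forall>a\<in>Y. \<forall>b\<in>Y.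
                       norm (a - y) < \<delta> \<longrightarrow> norm (b - y) < \<delta> \<longrightarrow> \<bar>h a - h b\<bar> \<le> L * norm (a - b)"
    \<comment> \<open>(A2)\<close>
    and A2_diff: "\<exists>U. open U \<and> Xbar \<times> Y \<subseteq> U \<and>
        (\<forall>(x,y)\<in>U. ((\<lambda>(x,y). f x y) has_derivative
                      (\<lambda>(dx,dy). inner (gx x y) dx + inner (gy x y) dy)) (at (x,y)))"
    and A2_lipx: "\<forall>x1\<in>Xbar. \<forall>y1\<in>Y. \<forall>x2\<in>Xbar. \<forall>y2\<in>Y.
        norm (gx x1 y1 - gx x2 y2) \<le> Lxx * norm (x1 - x2) + Lxy * norm (y1 - y2)"
    and A2_lipy: "\<forall>x1\<in>Xbar. \<forall>y1\<in>Y. \<forall>x2\<in>Xbar. \<forall>y2\<in>Y.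
        norm (gy x1 y1 - gy x2 y2) \<le> Lyx * norm (x1 - x2) + Lyy * norm (y1 - y2)"
    \<comment> \<open>(A3)\<close>
    and A3_mu: "\<mu> > 0"
    and A3: "\<forall>x\<in>Xbar. \<forall>y\<in>Y. frechet_subdiff Y h y \<noteq> {} \<longrightarrow>
        (SUP w\<in>Y. f x w - h w) - (f x y - h y)
          \<le> 1 / (2 * \<mu>) * (infdist 0 ((\<lambda>g. - gy x y + g) ` frechet_subdiff Y h y))\<^sup>2"
    \<comment> \<open>reformulation parameters; gtx, gty are the partial gradients of ftilde on X x Y,
        and l is a blockwise Lipschitz constant of them on X x Y\<close>
    and rho: "\<rho> > 0"
    and grad_ftilde: "\<forall>x\<in>X. \<forall>y\<in>Y. ((\<lambda>(x,y). ftilde f \<rho> x y) has_derivative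
                      (\<lambda>(dx,dy). inner (gtx x y) dx + inner (gty x y) dy)) (at (x,y))"
    and l_lipx: "\<forall>x1\<in>X. \<forall>y1\<in>Y. \<forall>x2\<in>X. \<forall>y2\<in>Y.
        norm (gtx x1 y1 - gtx x2 y2) \<le> l * norm (x1 - x2) + l * norm (y1 - y2)"
    and l_lipy: "\<forall>x1\<in>X. \<forall>y1\<in>Y. \<forall>x2\<in>X. \<forall>y2\<in>Y.
        norm (gty x1 y1 - gty x2 y2) \<le> l * norm (x1 - x2) + l * norm (y1 - y2)"
    and p_l: "p > l"
    \<comment> \<open>step size\<close>
    and tau_pos: "\<tau>2 > 0"
    and tau_zeta: "\<zeta> > 0 \<longrightarrow> \<tau>2 < 1 / \<zeta>"
    \<comment> \<open>the iterate and the argmins\<close>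
    and yt: "yt \<in> Y"
    and xt: "is_arg_min (\<lambda>x. fhat f \<rho> p x yt zt) (\<lambda>x. x \<in> X) xt"
    and yp: "is_arg_min (prox_obj h \<tau>2 (yt + \<tau>2 *\<^sub>R gty xt yt)) (\<lambda>y. y \<in> Y) yp"
    and x1: "is_arg_min (\<lambda>x. fhat f \<rho> p x yp zt) (\<lambda>x. x \<in> X) x1"
    and xs: "is_arg_min (\<lambda>x. Phi f h Y \<rho> p x zt) (\<lambda>x. x \<in> X) xs"
  shows "(norm (x1 - xs))\<^sup>2
     \<le> 3 / (\<mu> * (p - l) * \<tau>2\<^sup>2)
        * (1 + \<tau>2\<^sup>2 * l\<^sup>2 + ((p + l) / (p - l))\<^sup>2 * \<tau>2\<^sup>2 * l\<^sup>2) * (norm (yp - yt))\<^sup>2"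
proof -
  interpret proximal_minimax f gtx gty h X Y \<rho> l p zt
  proof
    show "convex X"
      by (simp add: X_def)
    show "compact Y"
      using A1_closed A1_bounded by (simp add: compact_eq_bounded_closed)
    show "continuous_on Y h"
      by (rule continuous_on_if_locally_lipschitz[OF A1_loclip])
  qed (use A1_proper grad_ftilde l_lipx in auto)
  have x1X: "x1 \<in> X" and ypY: "yp \<in> Y" and xtX: "xt \<in> X"
    using x1 yp xt by (simp_all add: is_arg_min_def)
  have "Amap x1 \<in> Xbar"
    using x1X by (simp add: X_def Xbar_def)
  have gy_eq: "gy (Amap x1) yp = gty x1 yp"
  proof -
    obtain U where "Xbar \<times> Y \<subseteq> U" and "\<forall>(x, y)\<in>U. ((\<lambda>(x, y). f x y) has_derivative
        (\<lambda>(dx, dy). inner (gx x y) dx + inner (gy x y) dy)) (at (x, y))"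
      using A2_diff by blast
    with \<open>Amap x1 \<in> Xbar\<close> ypY have "((\<lambda>(x, y). f x y) has_derivative
        (\<lambda>(dx, dy). inner (gx (Amap x1) yp) dx + inner (gy (Amap x1) yp) dy)) (at (Amap x1, yp))"
      by blast
    from ftilde_gradient_snd_eq[OF this ftilde_gradient[OF x1X ypY]] show ?thesis ..
  qed
  have subgradient: "(1 / \<tau>2) *\<^sub>R (yt + \<tau>2 *\<^sub>R gty xt yt - yp) \<in> frechet_subdiff Y h yp" (is "?g \<in> _")
    by (rule prox_frechet_subgradient[OF tau_pos yp])
  have "(SUP w\<in>Y. f (Amap x1) w - h w) - (f (Amap x1) yp - h yp)
      \<le> 1 / (2 * \<mu>) * (infdist 0 ((\<lambda>g. - gy (Amap x1) yp + g) ` frechet_subdiff Y h yp))\<^sup>2"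
    using A3 \<open>Amap x1 \<in> Xbar\<close> ypY subgradient by blast
  also have "\<dots> \<le> 1 / (2 * \<mu>) * (norm (?g - gty x1 yp))\<^sup>2"
    using infdist_shifted_le[OF subgradient] A3_mu
    by (intro mult_left_mono power_mono infdist_nonneg) (simp_all add: gy_eq)
  finally have gap: "(p - l) / 2 * (norm (x1 - xs))\<^sup>2 \<le> 1 / (2 * \<mu>) * (norm (?g - gty x1 yp))\<^sup>2"
    using Phi_argmin_distance_le[OF xs ypY x1] by linarith
  have "norm (?g - gty x1 yp) \<le> norm (yp - yt) / \<tau>2 + norm (gty xt yt - gty x1 yp)"
    by (rule prox_residual_norm_le[OF tau_pos])
  moreover have "norm (gty xt yt - gty x1 yp) \<le> l * norm (x1 - xt) + l * norm (yp - yt)"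
    using l_lipy xtX yt x1X ypY by (metis norm_minus_commute)
  ultimately have "norm (?g - gty x1 yp) \<le> norm (yp - yt) / \<tau>2 + l * norm (x1 - xt) + l * norm (yp - yt)"
    by linarith
  with gap show ?thesis
    by (intro error_bound_from_estimates[OF A3_mu p_l tau_pos _ _ _ norm_ge_zero _ fhat_argmin_stability[OF yt ypY xt x1]])
      simp_all
qed

end
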